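(* Let $A=(a_{ij})$ and $B=(b_{ij})$ be two $n\times n$ generalized tournament matrices with the same principal minors of orders $2$ and $3$. For all pairwise distinct $i,j,k\in[n]$: (i) if $\{i,j\}\in P_{\neq}$ and $\{i,k\},\{j,k\}\in P_{=}$, then $a_{ik}=a_{jk}=b_{ik}=b_{jk}$; (ii) if $\{i,j\}\in P_{=}$ and $\{i,k\},\{j,k\}\in P_{\neq}$, then $a_{ik}=a_{jk}=1-b_{ik}=1-b_{jk}$; (iii) if $\{i,j\}\in P_{=}$ and $\{i,k\},\{j,k\}\notin P_{=}$, then $a_{ik}=1/2$ if and only if $a_{jk}=1/2$; (iv) if $\{i,j\}\in P_{\neq}$ and $\{i,k\},\{j,k\}\notin P_{\neq}$, then $a_{ik}=1/2$ if and only if $a_{jk}=1/2$.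
   Context: A generalized tournament matrix of order $n$ is a real $n\times n$ matrix $M=(m_{ij})$ with nonnegative entries satisfying $M+M^{t}=J_n-I_n$ ($J_n$ the all-ones matrix, $I_n$ the identity). Write $[n]=\{1,\ldots,n\}$. When $A$ and $B$ have the same principal minors of order $2$, for all $i\neq j$ one has $a_{ij}=b_{ij}$ or $a_{ij}=1-b_{ij}$, and the set of $2$-subsets of $[n]$ is partitioned into $P_{=}=\{\{i,j\}: a_{ij}=b_{ij},\ a_{ij}\neq 1/2\}$, $P_{\neq}=\{\{i,j\}: a_{ij}=1-b_{ij},\ a_{ij}\neq 1/2\}$, and $P_{1/2}=\{\{i,j\}: a_{ij}=b_{ij}=1/2\}$. *)

theory Defs
  imports Jordan_Normal_Form.DL_Submatrix Jordan_Normal_Form.Determinant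
begin

text \<open>Matrices are indexed by 0..n-1 (standing for [n] = 1..n).\<close>

definition gen_tournament :: "nat \<Rightarrow> real mat \<Rightarrow> bool" where
  "gen_tournament n M \<longleftrightarrow> M \<in> carrier_mat n n \<and>
     (\<forall>i<n. \<forall>j<n. M $$ (i,j) \<ge> 0) \<and>
     M + transpose_mat M = mat n n (\<lambda>_. 1) - 1\<^sub>m n"

definition principal_minor :: "real mat \<Rightarrow> nat set \<Rightarrow> real" where
  "principal_minor M S = det (submatrix M S S)"

definition same_principal_minors :: "nat \<Rightarrow> nat \<Rightarrow> real mat \<Rightarrow> real mat \<Rightarrow> bool" where
  "same_principal_minors n k A B \<longleftrightarrow>
     (\<forall>S. S \<subseteq> {0..<n} \<and> card S = k \<longrightarrow> principal_minor A S = principal_minor B S)"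

text \<open>Membership of the 2-subset {i,j} in P_= and P_{\<noteq>} (symmetric in i,j for tournament matrices).\<close>

definition P_eq :: "real mat \<Rightarrow> real mat \<Rightarrow> nat \<Rightarrow> nat \<Rightarrow> bool" where
  "P_eq A B i j \<longleftrightarrow> A $$ (i,j) = B $$ (i,j) \<and> A $$ (i,j) \<noteq> 1/2"

definition P_neq :: "real mat \<Rightarrow> real mat \<Rightarrow> nat \<Rightarrow> nat \<Rightarrow> bool" where
  "P_neq A B i j \<longleftrightarrow> A $$ (i,j) = 1 - B $$ (i,j) \<and> A $$ (i,j) \<noteq> 1/2"

end

theory Submission
  imports Defs
begin

text \<open>
  For a generalized tournament matrix the diagonal vanishes and the entries below the diagonal are
  determined by those above it. A principal minor of order 2 is then \<open>-a(1 - a)\<close> with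
  \<open>a = a\<^sub>i\<^sub>j\<close>, so equal minors give \<open>b\<^sub>i\<^sub>j \<in> {a\<^sub>i\<^sub>j, 1 - a\<^sub>i\<^sub>j}\<close>.
  A principal minor of order 3 is the weight of the two directed 3-cycles, which in terms of
  \<open>x = a\<^sub>i\<^sub>j\<close>, \<open>u = a\<^sub>i\<^sub>k\<close>, \<open>v = a\<^sub>j\<^sub>k\<close> reads
  \<open>x v (1 - u) + u (1 - v) (1 - x)\<close>. Complementing \<open>x\<close> alone, or \<open>u\<close> and \<open>v\<close> together, changes
  it by \<open>(1 - 2x)(v - u)\<close>. In each of the four cases \<open>B\<close> arises from \<open>A\<close> on the triangle by
  exactly such a flip with \<open>x \<noteq> 1/2\<close> (in cases (iii) and (iv) because an entry outside
  P= resp. P\<noteq> must be complemented resp. kept), so equality of the 3-minors forces \<open>u = v\<close>.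
\<close>

lemma pick_eqI:
  assumes "x \<in> S" "card {a\<in>S. a < x} = t"
  shows "pick S t = x"
  using pick_card_in_set[OF assms(1)] assms(2) by simp

lemma pick_pair:
  assumes "p < q"
  shows "pick {p,q} 0 = p" "pick {p,q} 1 = q"
proof -
  have "{a\<in>{p,q}. a < p} = {}" "{a\<in>{p,q}. a < q} = {p}"
    using assms by auto
  then have "card {a\<in>{p,q}. a < p} = 0" "card {a\<in>{p,q}. a < q} = 1"
    by simp_all
  then show "pick {p,q} 0 = p" "pick {p,q} 1 = q"
    by (auto intro: pick_eqI simp del: pick.simps)
qed

lemma pick_triple:
  assumes "p < q" "q < r"
  shows "pick {p,q,r} 0 = p" "pick {p,q,r} 1 = q" "pick {p,q,r} 2 = r"
proof -
  have "{a\<in>{p,q,r}. a < p} = {}" "{a\<in>{p,q,r}. a < q} = {p}" "{a\<in>{p,q,r}. a < r} = {p,q}"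
    using assms by auto
  then have "card {a\<in>{p,q,r}. a < p} = 0" "card {a\<in>{p,q,r}. a < q} = 1"
    "card {a\<in>{p,q,r}. a < r} = 2"
    using assms by simp_all
  then show "pick {p,q,r} 0 = p" "pick {p,q,r} 1 = q" "pick {p,q,r} 2 = r"
    by (auto intro: pick_eqI simp del: pick.simps)
qed

lemma submatrix_principal:
  assumes "M \<in> carrier_mat n n" "S \<subseteq> {0..<n}"
  shows submatrix_principal_carrier_mat: "submatrix M S S \<in> carrier_mat (card S) (card S)"
    and submatrix_principal_index:
      "\<And>a b. a < card S \<Longrightarrow> b < card S \<Longrightarrow> submatrix M S S $$ (a,b) = M $$ (pick S a, pick S b)"
proof -
  have rows: "{i. i < dim_row M \<and> i \<in> S} = S" and cols: "{j. j < dim_col M \<and> j \<in> S} = S"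
    using assms by auto
  show "submatrix M S S \<in> carrier_mat (card S) (card S)"
    unfolding carrier_mat_def mem_Collect_eq dim_submatrix rows cols by simp
  show "submatrix M S S $$ (a,b) = M $$ (pick S a, pick S b)" if "a < card S" "b < card S" for a b
    using submatrix_index[of a M S b S] that unfolding rows cols by simp
qed

lemma det_mat_2:
  assumes "(M :: 'a :: comm_ring_1 mat) \<in> carrier_mat 2 2"
  shows "det M = M $$ (0,0) * M $$ (1,1) - M $$ (0,1) * M $$ (1,0)"
proof -
  have "det (mat_delete M 0 j) = M $$ (1, 1 - j)" if "j < 2" for j
  proof -
    have "mat_delete M 0 j \<in> carrier_mat 1 1" using mat_delete_carrier[OF assms] by simp
    then show ?thesis using assms that by (auto simp: det_single mat_delete_def)
  qed
  then show ?thesis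
    using laplace_expansion_row[OF assms, of 0] by (simp add: eval_nat_numeral cofactor_def)
qed

lemma det_mat_3:
  assumes "(M :: 'a :: comm_ring_1 mat) \<in> carrier_mat 3 3"
  shows "det M =
      M $$ (0,0) * (M $$ (1,1) * M $$ (2,2) - M $$ (1,2) * M $$ (2,1))
    - M $$ (0,1) * (M $$ (1,0) * M $$ (2,2) - M $$ (1,2) * M $$ (2,0))
    + M $$ (0,2) * (M $$ (1,0) * M $$ (2,1) - M $$ (1,1) * M $$ (2,0))"
proof -
  have minor: "mat_delete M 0 j \<in> carrier_mat 2 2" for j
    using mat_delete_carrier[OF assms] by simp
  have entry: "mat_delete M 0 j $$ (a,b) = M $$ (Suc a, if b < j then b else Suc b)"
    if "a < 2" "b < 2" for j a b
    using assms that by (simp add: mat_delete_def)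
  have "det M = (\<Sum>j<3. M $$ (0,j) * cofactor M 0 j)"
    by (rule laplace_expansion_row[OF assms]) simp
  also have "\<dots> = M $$ (0,0) * cofactor M 0 0 + M $$ (0,1) * cofactor M 0 1
      + M $$ (0,2) * cofactor M 0 2"
    by (simp add: eval_nat_numeral)
  also have "\<dots> = M $$ (0,0) * (M $$ (1,1) * M $$ (2,2) - M $$ (1,2) * M $$ (2,1))
    - M $$ (0,1) * (M $$ (1,0) * M $$ (2,2) - M $$ (1,2) * M $$ (2,0))
    + M $$ (0,2) * (M $$ (1,0) * M $$ (2,1) - M $$ (1,1) * M $$ (2,0))"
    by (simp add: cofactor_def det_mat_2[OF minor] entry numeral_2_eq_2 algebra_simps)
  finally show ?thesis .
qed

lemma principal_minor_pair:
  assumes M: "M \<in> carrier_mat n n" and "p < q" "q < n"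
  shows "principal_minor M {p,q} = M $$ (p,p) * M $$ (q,q) - M $$ (p,q) * M $$ (q,p)"
proof -
  have S: "{p,q} \<subseteq> {0..<n}" "card {p,q} = 2" using assms(2,3) by auto
  show ?thesis
    using det_mat_2[OF submatrix_principal_carrier_mat[OF M S(1), unfolded S(2)]]
      submatrix_principal_index[OF M S(1)] pick_pair[OF assms(2)]
    by (simp add: principal_minor_def S(2))
qed

lemma principal_minor_triple:
  assumes M: "M \<in> carrier_mat n n" and "p < q" "q < r" "r < n"
  shows "principal_minor M {p,q,r} =
      M $$ (p,p) * (M $$ (q,q) * M $$ (r,r) - M $$ (q,r) * M $$ (r,q))
    - M $$ (p,q) * (M $$ (q,p) * M $$ (r,r) - M $$ (q,r) * M $$ (r,p))
    + M $$ (p,r) * (M $$ (q,p) * M $$ (r,q) - M $$ (q,q) * M $$ (r,p))"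
proof -
  have S: "{p,q,r} \<subseteq> {0..<n}" "card {p,q,r} = 3" using assms(2-4) by auto
  show ?thesis
    using det_mat_3[OF submatrix_principal_carrier_mat[OF M S(1), unfolded S(2)]]
      submatrix_principal_index[OF M S(1)] pick_triple[OF assms(2,3)]
    by (simp add: principal_minor_def S(2))
qed

definition cycle_weight :: "'a :: comm_ring_1 mat \<Rightarrow> nat \<Rightarrow> nat \<Rightarrow> nat \<Rightarrow> 'a" where
  "cycle_weight M i j k = M $$ (i,j) * M $$ (j,k) * M $$ (k,i) + M $$ (i,k) * M $$ (k,j) * M $$ (j,i)"

lemma cycle_weight_swap:
  "cycle_weight M j i k = cycle_weight M i j k" "cycle_weight M i k j = cycle_weight M i j k"
  by (simp_all add: cycle_weight_def ac_simps)

lemma distinct_triple_wlog: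
  fixes P :: "nat \<Rightarrow> nat \<Rightarrow> nat \<Rightarrow> bool"
  assumes swap12: "\<And>i j k. P i j k \<Longrightarrow> P j i k" and swap23: "\<And>i j k. P i j k \<Longrightarrow> P i k j"
    and sorted: "\<And>i j k. i < j \<Longrightarrow> j < k \<Longrightarrow> P i j k"
    and "i \<noteq> j" "i \<noteq> k" "j \<noteq> k"
  shows "P i j k"
proof -
  consider "i < j" "j < k" | "i < k" "k < j" | "j < i" "i < k"
    | "j < k" "k < i" | "k < i" "i < j" | "k < j" "j < i"
    using assms(4-6) by linarith
  then show ?thesis
    by cases (metis swap12 swap23 sorted)+
qed

lemma principal_minor_triple_zero_diag:
  assumes M: "M \<in> carrier_mat n n" and diag: "\<And>t. t < n \<Longrightarrow> M $$ (t,t) = 0"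
    and "i < n" "j < n" "k < n" "i \<noteq> j" "i \<noteq> k" "j \<noteq> k"
  shows "principal_minor M {i,j,k} = cycle_weight M i j k"
proof -
  let ?P = "\<lambda>i j k. i < n \<and> j < n \<and> k < n \<longrightarrow> principal_minor M {i,j,k} = cycle_weight M i j k"
  have "?P i j k"
  proof (rule distinct_triple_wlog)
    show "?P j i k" if "?P i j k" for i j k
      using that by (metis insert_commute cycle_weight_swap(1))
    show "?P i k j" if "?P i j k" for i j k
      using that by (metis insert_commute cycle_weight_swap(2))
    show "?P p q r" if "p < q" "q < r" for p q r
      using principal_minor_triple[OF M that] diag that by (simp add: cycle_weight_def ac_simps)
  qed (use assms(6-8) in auto)
  with assms(3-5) show ?thesis by simp
qed

lemma gen_tournament_entry_sum:
  assumes "gen_tournament n M" "a < n" "b < n"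
  shows "M $$ (a,b) + M $$ (b,a) = (if a = b then 0 else 1)"
proof -
  have M: "M \<in> carrier_mat n n" and sum: "M + transpose_mat M = mat n n (\<lambda>_. 1) - 1\<^sub>m n"
    using assms(1) unfolding gen_tournament_def by auto
  show ?thesis
    using arg_cong[where f = "\<lambda>X. X $$ (a,b)", OF sum] M assms(2,3) by auto
qed

lemma gen_tournament_diag:
  "gen_tournament n M \<Longrightarrow> a < n \<Longrightarrow> M $$ (a,a) = 0"
  using gen_tournament_entry_sum[of n M a a] by simp

lemma gen_tournament_converse:
  "gen_tournament n M \<Longrightarrow> a < n \<Longrightarrow> b < n \<Longrightarrow> a \<noteq> b \<Longrightarrow> M $$ (b,a) = 1 - M $$ (a,b)"
  using gen_tournament_entry_sum[of n M a b] by simp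

lemma gen_tournament_principal_minor_pair:
  assumes T: "gen_tournament n M" and "a < n" "b < n" "a \<noteq> b"
  shows "principal_minor M {a,b} = - M $$ (a,b) * (1 - M $$ (a,b))"
proof -
  have M: "M \<in> carrier_mat n n" using T unfolding gen_tournament_def by simp
  note entries = gen_tournament_diag[OF T assms(2)] gen_tournament_diag[OF T assms(3)]
    gen_tournament_converse[OF T assms(2-4)]
  consider "a < b" | "b < a" using assms(4) by linarith
  then show ?thesis
  proof cases
    case 1
    show ?thesis using principal_minor_pair[OF M 1 assms(3)] entries by simp
  next
    case 2
    show ?thesis using principal_minor_pair[OF M 2 assms(2)] entries by (simp add: insert_commute)
  qed
qed

definition triangle_weight :: "real \<Rightarrow> real \<Rightarrow> real \<Rightarrow> real" where
  "triangle_weight x u v = x * v * (1 - u) + u * (1 - v) * (1 - x)"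

lemma gen_tournament_principal_minor_triple:
  assumes T: "gen_tournament n M"
    and "i < n" "j < n" "k < n" "i \<noteq> j" "i \<noteq> k" "j \<noteq> k"
  shows "principal_minor M {i,j,k} = triangle_weight (M $$ (i,j)) (M $$ (i,k)) (M $$ (j,k))"
proof -
  have M: "M \<in> carrier_mat n n" using T unfolding gen_tournament_def by simp
  have "principal_minor M {i,j,k} = cycle_weight M i j k"
    using principal_minor_triple_zero_diag[OF M gen_tournament_diag[OF T] assms(2-7)] .
  also have "\<dots> = triangle_weight (M $$ (i,j)) (M $$ (i,k)) (M $$ (j,k))"
    unfolding cycle_weight_def triangle_weight_def gen_tournament_converse[OF T assms(2,3,5)]
      gen_tournament_converse[OF T assms(2,4,6)] gen_tournament_converse[OF T assms(3,4,7)]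
    by (simp add: algebra_simps)
  finally show ?thesis .
qed

lemma triangle_weight_flip_first:
  "triangle_weight (1 - x) u v = triangle_weight x u v + (1 - 2 * x) * (v - u)"
  by (simp add: triangle_weight_def algebra_simps)

lemma triangle_weight_flip_last_two:
  "triangle_weight x (1 - u) (1 - v) = triangle_weight (1 - x) u v"
  by (simp add: triangle_weight_def algebra_simps)

lemma triangle_weight_odd_flip_eq:
  assumes "x \<noteq> 1/2" and "triangle_weight x' u' v' = triangle_weight x u v"
    and "(x' = 1 - x \<and> u' = u \<and> v' = v) \<or> (x' = x \<and> u' = 1 - u \<and> v' = 1 - v)"
  shows "u = v"
proof -
  have "triangle_weight (1 - x) u v = triangle_weight x u v"
    using assms(2,3) triangle_weight_flip_last_two by auto
  then have "(1 - 2 * x) * (v - u) = 0" by (simp add: triangle_weight_flip_first)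
  with assms(1) show ?thesis by simp
qed

lemma same_principal_minors_2_entry:
  assumes TA: "gen_tournament n A" and TB: "gen_tournament n B"
    and same: "same_principal_minors n 2 A B" and "a < n" "b < n" "a \<noteq> b"
  shows "B $$ (a,b) = A $$ (a,b) \<or> B $$ (a,b) = 1 - A $$ (a,b)"
proof -
  have "principal_minor A {a,b} = principal_minor B {a,b}"
    using same assms(4-6) by (auto simp: same_principal_minors_def)
  then have "(B $$ (a,b) - A $$ (a,b)) * (B $$ (a,b) - (1 - A $$ (a,b))) = 0"
    using gen_tournament_principal_minor_pair[OF TA assms(4-6)]
      gen_tournament_principal_minor_pair[OF TB assms(4-6)] by (simp add: algebra_simps)
  then show ?thesis by simp
qed

lemma same_principal_minors_2_entry_eq:
  assumes "gen_tournament n A" "gen_tournament n B" "same_principal_minors n 2 A B"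
    and "a < n" "b < n" "a \<noteq> b" and "P_eq A B a b \<or> \<not> P_neq A B a b"
  shows "B $$ (a,b) = A $$ (a,b)"
  using same_principal_minors_2_entry[OF assms(1-6)] assms(7) by (auto simp: P_eq_def P_neq_def)

lemma same_principal_minors_2_entry_complement:
  assumes "gen_tournament n A" "gen_tournament n B" "same_principal_minors n 2 A B"
    and "a < n" "b < n" "a \<noteq> b" and "P_neq A B a b \<or> \<not> P_eq A B a b"
  shows "B $$ (a,b) = 1 - A $$ (a,b)"
  using same_principal_minors_2_entry[OF assms(1-6)] assms(7) by (auto simp: P_eq_def P_neq_def)

lemma same_principal_minors_3_triangle_weight:
  assumes TA: "gen_tournament n A" and TB: "gen_tournament n B"
    and same: "same_principal_minors n 3 A B"
    and "i < n" "j < n" "k < n" "i \<noteq> j" "i \<noteq> k" "j \<noteq> k"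
  shows "triangle_weight (B $$ (i,j)) (B $$ (i,k)) (B $$ (j,k))
       = triangle_weight (A $$ (i,j)) (A $$ (i,k)) (A $$ (j,k))"
proof -
  have "principal_minor A {i,j,k} = principal_minor B {i,j,k}"
    using same assms(4-9) by (auto simp: same_principal_minors_def)
  then show ?thesis
    using gen_tournament_principal_minor_triple[OF TA assms(4-9)]
      gen_tournament_principal_minor_triple[OF TB assms(4-9)] by simp
qed

lemma same_principal_minors_complement_ij:
  assumes "gen_tournament n A" "gen_tournament n B"
    and "same_principal_minors n 2 A B" "same_principal_minors n 3 A B"
    and "i < n" "j < n" "k < n" "i \<noteq> j" "i \<noteq> k" "j \<noteq> k"
    and "P_neq A B i j" "P_eq A B i k \<or> \<not> P_neq A B i k" "P_eq A B j k \<or> \<not> P_neq A B j k"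
  shows "A $$ (i,k) = A $$ (j,k) \<and> B $$ (i,k) = A $$ (i,k) \<and> B $$ (j,k) = A $$ (j,k)"
proof -
  have ij: "A $$ (i,j) \<noteq> 1/2" "B $$ (i,j) = 1 - A $$ (i,j)"
    using assms(11) by (auto simp: P_neq_def)
  have ik_jk: "B $$ (i,k) = A $$ (i,k)" "B $$ (j,k) = A $$ (j,k)"
    using same_principal_minors_2_entry_eq[OF assms(1-3) assms(5,7,9) assms(12)]
      same_principal_minors_2_entry_eq[OF assms(1-3) assms(6,7,10) assms(13)] .
  have "A $$ (i,k) = A $$ (j,k)"
    using triangle_weight_odd_flip_eq[OF ij(1)
        same_principal_minors_3_triangle_weight[OF assms(1,2,4-10)]] ij(2) ik_jk
    by blast
  with ik_jk show ?thesis by simp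
qed

lemma same_principal_minors_complement_ik_jk:
  assumes "gen_tournament n A" "gen_tournament n B"
    and "same_principal_minors n 2 A B" "same_principal_minors n 3 A B"
    and "i < n" "j < n" "k < n" "i \<noteq> j" "i \<noteq> k" "j \<noteq> k"
    and "P_eq A B i j" "P_neq A B i k \<or> \<not> P_eq A B i k" "P_neq A B j k \<or> \<not> P_eq A B j k"
  shows "A $$ (i,k) = A $$ (j,k) \<and> B $$ (i,k) = 1 - A $$ (i,k) \<and> B $$ (j,k) = 1 - A $$ (j,k)"
proof -
  have ij: "A $$ (i,j) \<noteq> 1/2" "B $$ (i,j) = A $$ (i,j)"
    using assms(11) by (auto simp: P_eq_def)
  have ik_jk: "B $$ (i,k) = 1 - A $$ (i,k)" "B $$ (j,k) = 1 - A $$ (j,k)"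
    using same_principal_minors_2_entry_complement[OF assms(1-3) assms(5,7,9) assms(12)]
      same_principal_minors_2_entry_complement[OF assms(1-3) assms(6,7,10) assms(13)] .
  have "A $$ (i,k) = A $$ (j,k)"
    using triangle_weight_odd_flip_eq[OF ij(1)
        same_principal_minors_3_triangle_weight[OF assms(1,2,4-10)]] ij(2) ik_jk
    by blast
  with ik_jk show ?thesis by simp
qed

theorem lemma4p2:
  fixes n :: nat and A B :: "real mat" and i j k :: nat
  assumes "gen_tournament n A" and "gen_tournament n B"
    and "same_principal_minors n 2 A B" and "same_principal_minors n 3 A B"
    and "i < n" and "j < n" and "k < n"
    and "i \<noteq> j" and "i \<noteq> k" and "j \<noteq> k"
  shows "(P_neq A B i j \<and> P_eq A B i k \<and> P_eq A B j k \<longrightarrow>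
            A $$ (i,k) = A $$ (j,k) \<and> A $$ (j,k) = B $$ (i,k) \<and> B $$ (i,k) = B $$ (j,k))
       \<and> (P_eq A B i j \<and> P_neq A B i k \<and> P_neq A B j k \<longrightarrow>
            A $$ (i,k) = A $$ (j,k) \<and> A $$ (j,k) = 1 - B $$ (i,k) \<and> 1 - B $$ (i,k) = 1 - B $$ (j,k))
       \<and> (P_eq A B i j \<and> \<not> P_eq A B i k \<and> \<not> P_eq A B j k \<longrightarrow>
            (A $$ (i,k) = 1/2 \<longleftrightarrow> A $$ (j,k) = 1/2))
       \<and> (P_neq A B i j \<and> \<not> P_neq A B i k \<and> \<not> P_neq A B j k \<longrightarrow>
            (A $$ (i,k) = 1/2 \<longleftrightarrow> A $$ (j,k) = 1/2))"
proof -
  note complement_ij = same_principal_minors_complement_ij[OF assms]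
    and complement_ik_jk = same_principal_minors_complement_ik_jk[OF assms]
  show ?thesis using complement_ij complement_ik_jk by auto
qed

end
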